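(* Let $\mathcal{D}$ be a Steiner $2$-design $S(2,k,v)$ that has a parallel class, and let $G_1$ be its $1$-block intersection graph $1$-$\mathrm{BIG}(\mathcal{D})$. If $G_1$ is silver, then $k^2 \mid v$.
   Context: A $2$-$(v,k,\lambda)$ design ($2<k<v$) is a pair $(V,\mathcal{B})$ where $V$ is a $v$-set and $\mathcal{B}$ is a collection of $k$-subsets of $V$ (blocks) such that every $2$-subset of $V$ lies in exactly $\lambda$ blocks; a Steiner $2$-design $S(2,k,v)$ is a $2$-$(v,k,1)$ design. A parallel class is a set of blocks partitioning $V$. For a design $\mathcal{D}$ and integer $i\ge 0$, the $i$-block intersection graph $i$-$\mathrm{BIG}(\mathcal{D})$ has the blocks as vertices, two blocks adjacent iff they intersect in exactly $i$ elements. An $\alpha$-set of a graph is a maximum independent set. Let $G$ be an $r$-regular graph and $c$ a proper $(r+1)$-coloring of $G$. A vertex $x$ is rainbow with respect to $c$ if every one of the $r+1$ colors appears on the closed neighborhood $N[x]=N(x)\cup\{x\}$. Given an $\alpha$-set $I$, $c$ is silver with respect to $I$ if every $x\in I$ is rainbow; $G$ is silver if it admits a silver coloring with respect to some $\alpha$-set. (The $1$-BIG of an $S(2,k,v)$ is regular, of degree $k(v-k)/(k-1)$.) *)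

theory Defs
  imports Main
begin

text \<open>A Steiner 2-design S(2,k,v) on point set V with block set B (v = card V).
  Since lambda = 1 and k > 2, blocks cannot be repeated, so B is a set of k-subsets.\<close>
definition steiner_2_design :: "'a set \<Rightarrow> 'a set set \<Rightarrow> nat \<Rightarrow> bool" where
  "steiner_2_design V B k \<longleftrightarrow>
     finite V \<and> 2 < k \<and> k < card V \<and>
     (\<forall>b\<in>B. b \<subseteq> V \<and> card b = k) \<and>
     (\<forall>x\<in>V. \<forall>y\<in>V. x \<noteq> y \<longrightarrow> card {b\<in>B. {x, y} \<subseteq> b} = 1)"

definition parallel_class :: "'a set \<Rightarrow> 'a set set \<Rightarrow> 'a set set \<Rightarrow> bool" where
  "parallel_class V B P \<longleftrightarrow>
     P \<subseteq> B \<and> \<Union>P = V \<and> (\<forall>b\<in>P. \<forall>c\<in>P. b \<noteq> c \<longrightarrow> b \<inter> c = {})"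

definition has_parallel_class :: "'a set \<Rightarrow> 'a set set \<Rightarrow> bool" where
  "has_parallel_class V B \<longleftrightarrow> (\<exists>P. parallel_class V B P)"

definition big_adj :: "nat \<Rightarrow> 'a set set \<Rightarrow> 'a set \<Rightarrow> 'a set \<Rightarrow> bool" where
  "big_adj i B b c \<longleftrightarrow> b \<in> B \<and> c \<in> B \<and> b \<noteq> c \<and> card (b \<inter> c) = i"

definition independent_set :: "'v set \<Rightarrow> ('v \<Rightarrow> 'v \<Rightarrow> bool) \<Rightarrow> 'v set \<Rightarrow> bool" where
  "independent_set Vg E I \<longleftrightarrow> I \<subseteq> Vg \<and> (\<forall>x\<in>I. \<forall>y\<in>I. \<not> E x y)"

definition alpha_set :: "'v set \<Rightarrow> ('v \<Rightarrow> 'v \<Rightarrow> bool) \<Rightarrow> 'v set \<Rightarrow> bool" where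
  "alpha_set Vg E I \<longleftrightarrow> independent_set Vg E I \<and>
     (\<forall>J. independent_set Vg E J \<longrightarrow> card J \<le> card I)"

definition regular_graph :: "'v set \<Rightarrow> ('v \<Rightarrow> 'v \<Rightarrow> bool) \<Rightarrow> nat \<Rightarrow> bool" where
  "regular_graph Vg E r \<longleftrightarrow> (\<forall>x\<in>Vg. card {y\<in>Vg. E x y} = r)"

definition closed_nbhd :: "'v set \<Rightarrow> ('v \<Rightarrow> 'v \<Rightarrow> bool) \<Rightarrow> 'v \<Rightarrow> 'v set" where
  "closed_nbhd Vg E x = {y\<in>Vg. E x y} \<union> {x}"

definition proper_coloring :: "'v set \<Rightarrow> ('v \<Rightarrow> 'v \<Rightarrow> bool) \<Rightarrow> nat \<Rightarrow> ('v \<Rightarrow> nat) \<Rightarrow> bool" where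
  "proper_coloring Vg E n c \<longleftrightarrow>
     (\<forall>x\<in>Vg. c x < n) \<and> (\<forall>x\<in>Vg. \<forall>y\<in>Vg. E x y \<longrightarrow> c x \<noteq> c y)"

definition rainbow :: "'v set \<Rightarrow> ('v \<Rightarrow> 'v \<Rightarrow> bool) \<Rightarrow> nat \<Rightarrow> ('v \<Rightarrow> nat) \<Rightarrow> 'v \<Rightarrow> bool" where
  "rainbow Vg E n c x \<longleftrightarrow> c ` closed_nbhd Vg E x = {..<n}"

definition silver :: "'v set \<Rightarrow> ('v \<Rightarrow> 'v \<Rightarrow> bool) \<Rightarrow> bool" where
  "silver Vg E \<longleftrightarrow> (\<exists>r. regular_graph Vg E r \<and>
     (\<exists>I c. alpha_set Vg E I \<and> proper_coloring Vg E (r + 1) c \<and>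
            (\<forall>x\<in>I. rainbow Vg E (r + 1) c x)))"

end

theory Submission
  imports Defs
begin

(* In a Steiner 2-design two distinct blocks share at most one point, so
   two blocks are adjacent in the 1-block intersection graph exactly when they meet;
   independent sets are families of pairwise disjoint blocks.  Hence an alpha-set I has
   as many blocks as a parallel class, namely n = v/k, and is itself a parallel class.
   If the graph is r-regular and silver with respect to I, then r >= n (every block meets
   at least 2(n-1) others), so some colour j misses I.  The closed neighbourhood of x in I
   consists of the r+1 blocks meeting x, and as x is rainbow each colour occurs on it
   exactly once; so every block of I meets exactly one block of the colour class C_j.
   Conversely every block outside the parallel class I meets exactly k blocks of I.
   Double counting the pairs (x, b) with x in I, b in C_j, x meeting b gives n = k |C_j|,
   hence v = k n = k^2 |C_j|. *)

text \<open>In an r-regular loopless graph the closed neighbourhood of a vertex has r+1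
  elements, so if it carries all r+1 colours, each colour occurs on it exactly once.\<close>
lemma rainbow_colour_unique:
  assumes "finite Vg" "regular_graph Vg E r" "x \<in> Vg" "\<not> E x x"
    and "rainbow Vg E (r + 1) c x" "j < r + 1"
  shows "card {y \<in> closed_nbhd Vg E x. c y = j} = 1"
proof -
  let ?N = "closed_nbhd Vg E x"
  have fin: "finite ?N" using assms(1) unfolding closed_nbhd_def by simp
  have "card ?N = r + 1"
    using assms(1-4) unfolding closed_nbhd_def regular_graph_def by simp
  moreover have im: "c ` ?N = {..<r + 1}" using assms(5) unfolding rainbow_def .
  ultimately have inj: "inj_on c ?N" by (intro eq_card_imp_inj_on[OF fin]) simp
  obtain y where y: "y \<in> ?N" "c y = j" using im assms(6) by (metis imageE lessThan_iff)
  have "{y \<in> ?N. c y = j} = {y}" using y inj unfolding inj_on_def by auto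
  then show ?thesis by simp
qed

lemma missing_colour:
  assumes "finite I" "card I < n"
  obtains j where "j < n" "j \<notin> c ` I"
proof -
  have "\<not> {..<n} \<subseteq> c ` I"
  proof
    assume "{..<n} \<subseteq> c ` I"
    then have "card {..<n} \<le> card (c ` I)" using assms(1) by (intro card_mono) auto
    also have "\<dots> \<le> card I" using assms(1) by (rule card_image_le)
    finally show False using assms(2) by simp
  qed
  then show ?thesis using that by blast
qed

locale steiner_design =
  fixes V :: "'a set" and B :: "'a set set" and k :: nat
  assumes design: "steiner_2_design V B k"
begin

lemma finite_V: "finite V" and k_gt_2: "2 < k" and k_lt_v: "k < card V"
  and block_subset: "b \<in> B \<Longrightarrow> b \<subseteq> V" and block_card: "b \<in> B \<Longrightarrow> card b = k"
  and pair_unique: "\<lbrakk>x \<in> V; y \<in> V; x \<noteq> y\<rbrakk> \<Longrightarrow> card {b \<in> B. {x, y} \<subseteq> b} = 1"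
  using design unfolding steiner_2_design_def by auto

lemma finite_B: "finite B"
  using finite_V block_subset by (intro finite_subset[of B "Pow V"]) auto

lemma finite_block: "b \<in> B \<Longrightarrow> finite b"
  using finite_V block_subset finite_subset by blast

text \<open>Two distinct blocks share at most one point, since a pair of points lies in a
  unique block.\<close>
lemma block_inter_le_one:
  assumes "b \<in> B" "d \<in> B" "b \<noteq> d"
  shows "card (b \<inter> d) \<le> 1"
proof (rule ccontr)
  assume "\<not> card (b \<inter> d) \<le> 1"
  then have "\<not> (\<forall>p\<in>b \<inter> d. \<forall>q\<in>b \<inter> d. p = q)"
    using finite_block[OF assms(1)] card_le_Suc0_iff_eq[of "b \<inter> d"] by simp
  then obtain p q where pq: "p \<in> b \<inter> d" "q \<in> b \<inter> d" "p \<noteq> q" by blast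
  have "card {e \<in> B. {p, q} \<subseteq> e} = 1"
    using pq assms block_subset by (intro pair_unique) auto
  moreover have "{b, d} \<subseteq> {e \<in> B. {p, q} \<subseteq> e}" using pq assms by auto
  moreover have "finite {e \<in> B. {p, q} \<subseteq> e}" using finite_B by simp
  ultimately have "card {b, d} \<le> 1" using card_mono by metis
  then show False using assms(3) by simp
qed

lemma adj_iff: "big_adj 1 B b d \<longleftrightarrow> b \<in> B \<and> d \<in> B \<and> b \<noteq> d \<and> b \<inter> d \<noteq> {}"
proof
  assume "big_adj 1 B b d"
  then show "b \<in> B \<and> d \<in> B \<and> b \<noteq> d \<and> b \<inter> d \<noteq> {}" unfolding big_adj_def by auto
next
  assume bd: "b \<in> B \<and> d \<in> B \<and> b \<noteq> d \<and> b \<inter> d \<noteq> {}"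
  then have "card (b \<inter> d) \<le> 1" "card (b \<inter> d) \<noteq> 0"
    using block_inter_le_one finite_block by auto
  then show "big_adj 1 B b d" using bd unfolding big_adj_def by simp
qed

lemma independent_iff:
  "independent_set B (big_adj 1 B) J \<longleftrightarrow>
     J \<subseteq> B \<and> (\<forall>y\<in>J. \<forall>z\<in>J. y \<noteq> z \<longrightarrow> y \<inter> z = {})"
  unfolding independent_set_def adj_iff by blast

lemma card_Union_disjoint_blocks:
  assumes "J \<subseteq> B" "\<forall>y\<in>J. \<forall>z\<in>J. y \<noteq> z \<longrightarrow> y \<inter> z = {}"
  shows "card (\<Union>J) = k * card J"
proof -
  have "card (\<Union>J) = sum card J"
    using assms finite_block by (intro card_Union_disjoint) (auto simp: pairwise_def disjnt_def)
  also have "\<dots> = sum (\<lambda>_. k) J" using assms block_card by (intro sum.cong) auto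
  finally show ?thesis by simp
qed

lemma parallel_class_card:
  assumes "parallel_class V B P"
  shows "card V = k * card P"
  using assms card_Union_disjoint_blocks[of P] unfolding parallel_class_def by auto

text \<open>If a parallel class exists, every alpha-set of the 1-block intersection graph is a
  parallel class: it has at least as many disjoint blocks, hence covers all points.\<close>
lemma alpha_set_parallel_class:
  assumes "has_parallel_class V B" "alpha_set B (big_adj 1 B) I"
  shows "parallel_class V B I"
proof -
  obtain P where P: "parallel_class V B P" using assms(1) has_parallel_class_def by blast
  have I: "I \<subseteq> B" "\<forall>y\<in>I. \<forall>z\<in>I. y \<noteq> z \<longrightarrow> y \<inter> z = {}"
    using assms(2) unfolding alpha_set_def independent_iff by auto
  have "independent_set B (big_adj 1 B) P"
    using P unfolding parallel_class_def independent_iff by auto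
  then have "card P \<le> card I" using assms(2) unfolding alpha_set_def by blast
  have sub: "\<Union>I \<subseteq> V" using I(1) block_subset by blast
  then have "k * card I \<le> k * card P"
    using card_mono[OF finite_V sub] card_Union_disjoint_blocks[OF I] parallel_class_card[OF P]
    by simp
  with \<open>card P \<le> card I\<close> have "card (\<Union>I) = card V"
    using k_gt_2 card_Union_disjoint_blocks[OF I] parallel_class_card[OF P] by simp
  then have "\<Union>I = V" using card_subset_eq[OF finite_V sub] by simp
  then show ?thesis using I unfolding parallel_class_def by blast
qed

text \<open>A block outside a parallel class meets exactly k of its blocks, one point each.\<close>
lemma block_meets_parallel_class:
  assumes I: "parallel_class V B I" and b: "b \<in> B" "b \<notin> I"
  shows "card {x \<in> I. b \<inter> x \<noteq> {}} = k"
proof -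
  define I' where "I' = {x \<in> I. b \<inter> x \<noteq> {}}"
  have IB: "I \<subseteq> B" "\<Union>I = V" and disj: "\<forall>y\<in>I. \<forall>z\<in>I. y \<noteq> z \<longrightarrow> y \<inter> z = {}"
    using I unfolding parallel_class_def by auto
  have fin: "finite I'" using IB finite_B unfolding I'_def by (auto intro: finite_subset)
  have "b = (\<Union>x\<in>I'. b \<inter> x)" using IB block_subset[OF b(1)] unfolding I'_def by blast
  then have "card b = (\<Sum>x\<in>I'. card (b \<inter> x))"
    using card_UN_disjoint[OF fin, of "\<lambda>x. b \<inter> x"] finite_block[OF b(1)] disj
    unfolding I'_def by auto
  also have "\<dots> = (\<Sum>x\<in>I'. 1)"
  proof (rule sum.cong)
    fix x assume x: "x \<in> I'"
    then have "card (b \<inter> x) \<le> 1" using IB b block_inter_le_one unfolding I'_def by blast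
    moreover have "card (b \<inter> x) \<noteq> 0" using x finite_block[OF b(1)] unfolding I'_def by auto
    ultimately show "card (b \<inter> x) = 1" by simp
  qed simp
  finally show ?thesis using block_card[OF b(1)] unfolding I'_def by simp
qed

lemma transversal_family_count:
  assumes I: "parallel_class V B I" and C: "C \<subseteq> B" "C \<inter> I = {}"
    and one: "\<forall>x\<in>I. card {b \<in> C. b \<inter> x \<noteq> {}} = 1"
  shows "card I = k * card C"
proof -
  have finI: "finite I" using I finite_B finite_subset unfolding parallel_class_def by blast
  have finC: "finite C" using C finite_B finite_subset by blast
  have "(\<Sum>x\<in>I. card {b \<in> C. b \<inter> x \<noteq> {}}) = k * card C"
    using C block_meets_parallel_class[OF I]
    by (intro sum_multicount[OF finI finC]) (auto simp: Int_commute)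
  then show ?thesis using one by simp
qed

text \<open>Through a point p of a block x, the other blocks cover the remaining v-k points,
  so there are at least (v-k)/k of them.\<close>
lemma replication_bound:
  assumes x: "x \<in> B" and p: "p \<in> x"
  shows "card V - k \<le> k * card {b \<in> B. p \<in> b \<and> b \<noteq> x}"
proof -
  let ?S = "{b \<in> B. p \<in> b \<and> b \<noteq> x}"
  have cover: "V - x \<subseteq> \<Union>?S"
  proof
    fix q assume q: "q \<in> V - x"
    have "card {b \<in> B. {p, q} \<subseteq> b} = 1"
      using q p block_subset[OF x] by (intro pair_unique) auto
    then obtain b where "b \<in> B" "{p, q} \<subseteq> b"
      by (metis (no_types, lifting) card_1_singletonE mem_Collect_eq singletonI)
    then show "q \<in> \<Union>?S" using q by blast
  qed
  have "card V - k = card (V - x)"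
    using card_Diff_subset[OF finite_block[OF x] block_subset[OF x]] block_card[OF x] by simp
  also have "\<dots> \<le> card (\<Union>?S)"
    using cover finite_B finite_block by (intro card_mono) auto
  also have "\<dots> \<le> sum card ?S" by (rule card_Union_le_sum_card)
  also have "\<dots> = k * card ?S" using block_card by simp
  finally show ?thesis .
qed

text \<open>Lower bound on degrees: the blocks through two distinct points of x are disjoint
  sets of neighbours of x.\<close>
lemma degree_bound:
  assumes x: "x \<in> B"
  shows "2 * (card V - k) \<le> k * card {y \<in> B. big_adj 1 B x y}"
proof -
  obtain p1 p2 where p: "p1 \<in> x" "p2 \<in> x" "p1 \<noteq> p2"
  proof -
    have "\<not> card x \<le> 1" using block_card[OF x] k_gt_2 by simp
    then have "\<not> (\<forall>p\<in>x. \<forall>q\<in>x. p = q)" using card_le_Suc0_iff_eq[OF finite_block[OF x]] by simp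
    then show ?thesis using that by blast
  qed
  define S where "S p = {b \<in> B. p \<in> b \<and> b \<noteq> x}" for p
  have disj: "S p1 \<inter> S p2 = {}"
  proof (rule ccontr)
    assume "S p1 \<inter> S p2 \<noteq> {}"
    then obtain b where b: "b \<in> B" "b \<noteq> x" "{p1, p2} \<subseteq> b \<inter> x"
      using p unfolding S_def by blast
    then have "card {p1, p2} \<le> card (b \<inter> x)" using finite_block[OF x] by (intro card_mono) auto
    then show False using p block_inter_le_one[OF b(1) x b(2)] by simp
  qed
  have sub: "S p1 \<union> S p2 \<subseteq> {y \<in> B. big_adj 1 B x y}" using x p unfolding S_def adj_iff by blast
  have "2 * (card V - k) \<le> k * (card (S p1) + card (S p2))"
    using replication_bound[OF x p(1)] replication_bound[OF x p(2)]
    unfolding S_def by (simp add: distrib_left)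
  also have "card (S p1) + card (S p2) = card (S p1 \<union> S p2)"
    using disj finite_B by (simp add: S_def card_Un_disjoint)
  also have "\<dots> \<le> card {y \<in> B. big_adj 1 B x y}" using sub finite_B by (intro card_mono) auto
  finally show ?thesis by simp
qed

lemma closed_nbhd_eq:
  assumes "x \<in> B"
  shows "closed_nbhd B (big_adj 1 B) x = {b \<in> B. b \<inter> x \<noteq> {}}"
  using assms block_card[OF assms] k_gt_2 unfolding closed_nbhd_def adj_iff by auto

text \<open>If the 1-block intersection graph is r-regular, then r is at least the size n of
  a parallel class: there are n >= 2 blocks in it (as k < v), and 2(n-1) >= n.\<close>
lemma parallel_class_le_degree:
  assumes reg: "regular_graph B (big_adj 1 B) r" and I: "parallel_class V B I"
  shows "card I \<le> r"
proof -
  have vn: "card V = k * card I" using parallel_class_card[OF I] .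
  have n2: "2 \<le> card I"
  proof (rule ccontr)
    assume "\<not> 2 \<le> card I"
    then have "k * card I \<le> k * 1" by (intro mult_le_mono2) simp
    then show False using vn k_lt_v by simp
  qed
  then have "I \<noteq> {}" by auto
  then obtain x where x: "x \<in> B" using I unfolding parallel_class_def by blast
  have "2 * (card V - k) \<le> k * r"
    using degree_bound[OF x] reg x unfolding regular_graph_def by auto
  then have "k * (2 * (card I - 1)) \<le> k * r" using vn by (simp add: algebra_simps)
  then have "2 * (card I - 1) \<le> r" using k_gt_2 by simp
  then show ?thesis using n2 by linarith
qed

lemma colour_class_meets_rainbow_once:
  assumes reg: "regular_graph B (big_adj 1 B) r" and x: "x \<in> B"
    and rb: "rainbow B (big_adj 1 B) (r + 1) c x" and j: "j < r + 1"
  shows "card {b \<in> B. c b = j \<and> b \<inter> x \<noteq> {}} = 1"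
proof -
  have loopless: "\<not> big_adj 1 B x x" unfolding adj_iff by simp
  have "card {y \<in> closed_nbhd B (big_adj 1 B) x. c y = j} = 1"
    using rainbow_colour_unique[OF finite_B reg x loopless rb j] .
  moreover have "{y \<in> closed_nbhd B (big_adj 1 B) x. c y = j} = {b \<in> B. c b = j \<and> b \<inter> x \<noteq> {}}"
    unfolding closed_nbhd_eq[OF x] by blast
  ultimately show ?thesis by simp
qed

end

theorem theorem1:
  fixes V :: "'a set" and B :: "'a set set" and k :: nat
  assumes "steiner_2_design V B k"
    and "has_parallel_class V B"
    and "silver B (big_adj 1 B)"
  shows "k ^ 2 dvd card V"
proof -
  interpret steiner_design V B k using assms(1) by unfold_locales
  obtain r I c where reg: "regular_graph B (big_adj 1 B) r" and alpha: "alpha_set B (big_adj 1 B) I"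
    and rb: "\<forall>x\<in>I. rainbow B (big_adj 1 B) (r + 1) c x"
    using assms(3) unfolding silver_def by blast
  have I: "parallel_class V B I" using alpha_set_parallel_class[OF assms(2) alpha] .
  have IB: "I \<subseteq> B" using I unfolding parallel_class_def by blast
  have vn: "card V = k * card I" using parallel_class_card[OF I] .
  have "card I \<le> r" using parallel_class_le_degree[OF reg I] .
  moreover have "finite I" using finite_B IB by (rule rev_finite_subset)
  ultimately obtain j where j: "j < r + 1" "j \<notin> c ` I" using missing_colour[of I "r + 1" c] by auto
  define C where "C = {b \<in> B. c b = j}"
  have "\<forall>x\<in>I. card {b \<in> C. b \<inter> x \<noteq> {}} = 1"
    using colour_class_meets_rainbow_once[OF reg _ _ j(1)] rb IB unfolding C_def by auto
  moreover have "C \<subseteq> B" "C \<inter> I = {}" using j(2) unfolding C_def by auto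
  ultimately have "card I = k * card C" using transversal_family_count[OF I] by simp
  then show ?thesis using vn by (simp add: power2_eq_square)
qed

end
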